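(* Let $D$ be an oriented graph and $D'$ a subdigraph of $D$. If $S$ is a minimum hull set of $D$ in the two-path convexity, then $|S\cap V(D')|\leq \overrightarrow{hn}_{P_3}(D')$.
   Context: An oriented graph is an orientation of a finite simple graph. The two-path interval function on an oriented graph $D$ is $I_{P_3}(u,v)=\{u,v\}$ together with all vertices $w$ with $(u,w),(w,v)\in A(D)$ or $(v,w),(w,u)\in A(D)$. For $S\subseteq V(D)$, $I_{P_3}(S)=\bigcup_{u,v\in S}I_{P_3}(u,v)$; $C$ is convex if $I_{P_3}(C)=C$; the convex hull of $S$ is the smallest convex set containing $S$; a hull set is a set whose convex hull is $V(D)$, and $\overrightarrow{hn}_{P_3}(D)$ is the minimum size of a hull set (computed in $D'$ itself for $\overrightarrow{hn}_{P_3}(D')$). *)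

theory Defs
  imports Main
begin

definition oriented_graph :: "'a set \<Rightarrow> ('a \<times> 'a) set \<Rightarrow> bool" where
  "oriented_graph V A \<longleftrightarrow> finite V \<and> A \<subseteq> V \<times> V \<and>
     (\<forall>u v. (u, v) \<in> A \<longrightarrow> u \<noteq> v \<and> (v, u) \<notin> A)"

definition subdigraph :: "'a set \<Rightarrow> ('a \<times> 'a) set \<Rightarrow> 'a set \<Rightarrow> ('a \<times> 'a) set \<Rightarrow> bool" where
  "subdigraph V' A' V A \<longleftrightarrow> V' \<subseteq> V \<and> A' \<subseteq> A \<and> A' \<subseteq> V' \<times> V'"

definition P3_interval :: "('a \<times> 'a) set \<Rightarrow> 'a \<Rightarrow> 'a \<Rightarrow> 'a set" where
  "P3_interval A u v = {u, v} \<union>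
     {w. ((u, w) \<in> A \<and> (w, v) \<in> A) \<or> ((v, w) \<in> A \<and> (w, u) \<in> A)}"

definition P3_interval_set :: "('a \<times> 'a) set \<Rightarrow> 'a set \<Rightarrow> 'a set" where
  "P3_interval_set A S = (\<Union>u\<in>S. \<Union>v\<in>S. P3_interval A u v)"

definition P3_convex :: "('a \<times> 'a) set \<Rightarrow> 'a set \<Rightarrow> bool" where
  "P3_convex A C \<longleftrightarrow> P3_interval_set A C = C"

definition P3_hull :: "'a set \<Rightarrow> ('a \<times> 'a) set \<Rightarrow> 'a set \<Rightarrow> 'a set" where
  "P3_hull V A S = \<Inter> {C. S \<subseteq> C \<and> C \<subseteq> V \<and> P3_convex A C}"

definition P3_hull_set :: "'a set \<Rightarrow> ('a \<times> 'a) set \<Rightarrow> 'a set \<Rightarrow> bool" where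
  "P3_hull_set V A S \<longleftrightarrow> S \<subseteq> V \<and> P3_hull V A S = V"

definition P3_hull_number :: "'a set \<Rightarrow> ('a \<times> 'a) set \<Rightarrow> nat" where
  "P3_hull_number V A = Min {card S | S. P3_hull_set V A S}"

definition P3_minimum_hull_set :: "'a set \<Rightarrow> ('a \<times> 'a) set \<Rightarrow> 'a set \<Rightarrow> bool" where
  "P3_minimum_hull_set V A S \<longleftrightarrow> P3_hull_set V A S \<and> card S = P3_hull_number V A"

end

theory Submission
  imports Defs
begin

(* A D-convex set C meets V' in a D'-convex set, since every two-path of D' is one of D.
   Hence if T is a hull set of D', the set obtained from a hull set S of D by replacing
   S \<inter> V' with T is again a hull set of D: every D-convex set containing it contains
   the D'-hull of T, which is V', and therefore all of S.  If S is minimum, this forces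
   |S \<inter> V'| \<le> |T|. *)

lemma subset_P3_interval_set: "S \<subseteq> P3_interval_set A S"
  unfolding P3_interval_set_def P3_interval_def by blast

lemma P3_convex_iff_interval_set_subset: "P3_convex A C \<longleftrightarrow> P3_interval_set A C \<subseteq> C"
  using subset_P3_interval_set[of C A] unfolding P3_convex_def by blast

lemma P3_convex_vertex_set:
  assumes "A \<subseteq> V \<times> V"
  shows "P3_convex A V"
  using assms unfolding P3_convex_iff_interval_set_subset P3_interval_set_def P3_interval_def
  by blast

lemma P3_convex_Int_subdigraph:
  assumes "P3_convex A C" and "A' \<subseteq> A" and "A' \<subseteq> V' \<times> V'"
  shows "P3_convex A' (C \<inter> V')"
  unfolding P3_convex_iff_interval_set_subset
proof
  fix w assume "w \<in> P3_interval_set A' (C \<inter> V')"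
  then obtain u v where uv: "u \<in> C \<inter> V'" "v \<in> C \<inter> V'" and w: "w \<in> P3_interval A' u v"
    unfolding P3_interval_set_def by blast
  from w have "w \<in> P3_interval A u v" and "w \<in> V'"
    using assms(2,3) uv unfolding P3_interval_def by blast+
  moreover have "P3_interval A u v \<subseteq> C"
    using assms(1) uv unfolding P3_convex_def P3_interval_set_def by blast
  ultimately show "w \<in> C \<inter> V'" by blast
qed

lemma P3_hull_set_iff:
  assumes "A \<subseteq> V \<times> V"
  shows "P3_hull_set V A S \<longleftrightarrow>
           S \<subseteq> V \<and> (\<forall>C. S \<subseteq> C \<and> C \<subseteq> V \<and> P3_convex A C \<longrightarrow> V \<subseteq> C)"
  using P3_convex_vertex_set[OF assms] unfolding P3_hull_set_def P3_hull_def by blast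

lemma P3_hull_number_le_card:
  assumes "finite V" and "P3_hull_set V A T"
  shows "P3_hull_number V A \<le> card T"
proof -
  have "{card T | T. P3_hull_set V A T} \<subseteq> card ` Pow V"
    unfolding P3_hull_set_def by blast
  then have "finite {card T | T. P3_hull_set V A T}"
    using assms(1) finite_subset by blast
  then show ?thesis
    unfolding P3_hull_number_def using assms(2) by (auto intro: Min_le)
qed

lemma obtain_P3_minimum_hull_set:
  assumes "finite V" and "A \<subseteq> V \<times> V"
  obtains T where "P3_minimum_hull_set V A T"
proof -
  let ?cards = "{card T | T. P3_hull_set V A T}"
  have "P3_hull_set V A V"
    unfolding P3_hull_set_iff[OF assms(2)] by blast
  then have "?cards \<noteq> {}" by blast
  moreover have "?cards \<subseteq> card ` Pow V"
    unfolding P3_hull_set_def by blast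
  then have "finite ?cards"
    using assms(1) finite_subset by blast
  ultimately have "Min ?cards \<in> ?cards"
    by (rule Min_in[rotated])
  then obtain T where "P3_hull_set V A T" and "card T = P3_hull_number V A"
    unfolding P3_hull_number_def by auto
  then show ?thesis
    using that unfolding P3_minimum_hull_set_def by blast
qed

lemma P3_hull_set_replace_subdigraph_part:
  assumes "A \<subseteq> V \<times> V" and "subdigraph V' A' V A"
    and "P3_hull_set V A S" and "P3_hull_set V' A' T"
  shows "P3_hull_set V A ((S - V') \<union> T)"
proof -
  have V'V: "V' \<subseteq> V" and A'A: "A' \<subseteq> A" and A'V': "A' \<subseteq> V' \<times> V'"
    using assms(2) unfolding subdigraph_def by auto
  have S: "S \<subseteq> V" "\<And>C. S \<subseteq> C \<Longrightarrow> C \<subseteq> V \<Longrightarrow> P3_convex A C \<Longrightarrow> V \<subseteq> C"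
    using assms(3) P3_hull_set_iff[OF assms(1)] by auto
  have T: "T \<subseteq> V'" "\<And>C. T \<subseteq> C \<Longrightarrow> C \<subseteq> V' \<Longrightarrow> P3_convex A' C \<Longrightarrow> V' \<subseteq> C"
    using assms(4) P3_hull_set_iff[OF A'V'] by auto
  have "V \<subseteq> C" if C: "(S - V') \<union> T \<subseteq> C" "C \<subseteq> V" "P3_convex A C" for C
  proof -
    have "V' \<subseteq> C \<inter> V'"
      using T(1) C(1) P3_convex_Int_subdigraph[OF C(3) A'A A'V'] by (intro T(2)) auto
    then have "S \<subseteq> C" using C(1) by blast
    then show ?thesis using S(2) C(2,3) by blast
  qed
  moreover have "(S - V') \<union> T \<subseteq> V"
    using S(1) T(1) V'V by blast
  ultimately show ?thesis
    unfolding P3_hull_set_iff[OF assms(1)] by blast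
qed

lemma card_Int_le_P3_hull_set:
  assumes finV: "finite V" and AV: "A \<subseteq> V \<times> V" and "subdigraph V' A' V A"
    and "P3_minimum_hull_set V A S" and "P3_hull_set V' A' T"
  shows "card (S \<inter> V') \<le> card T"
proof -
  have "P3_hull_set V A S" and cS: "card S = P3_hull_number V A"
    using assms(4) unfolding P3_minimum_hull_set_def by auto
  then have finS: "finite S"
    using finV unfolding P3_hull_set_def by (blast intro: finite_subset)
  have "card (S - V') + card (S \<inter> V') = card S"
    using finS card_Diff_subset_Int[of S V'] card_mono[OF finS, of "S \<inter> V'"] by simp
  also have "\<dots> \<le> card ((S - V') \<union> T)"
    unfolding cS
    using P3_hull_set_replace_subdigraph_part[OF AV assms(3) \<open>P3_hull_set V A S\<close> assms(5)]
    by (intro P3_hull_number_le_card finV)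
  also have "\<dots> \<le> card (S - V') + card T"
    by (rule card_Un_le)
  finally show ?thesis by linarith
qed

theorem proposition8:
  fixes V V' :: "'a set" and A A' :: "('a \<times> 'a) set" and S :: "'a set"
  assumes "oriented_graph V A"
    and "subdigraph V' A' V A"
    and "P3_minimum_hull_set V A S"
  shows "card (S \<inter> V') \<le> P3_hull_number V' A'"
proof -
  have "finite V" and "A \<subseteq> V \<times> V"
    using assms(1) unfolding oriented_graph_def by auto
  have "finite V'" and "A' \<subseteq> V' \<times> V'"
    using \<open>finite V\<close> assms(2) finite_subset unfolding subdigraph_def by auto
  then obtain T where "P3_minimum_hull_set V' A' T"
    by (rule obtain_P3_minimum_hull_set)
  then show ?thesis
    using card_Int_le_P3_hull_set[OF \<open>finite V\<close> \<open>A \<subseteq> V \<times> V\<close> assms(2,3)]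
    unfolding P3_minimum_hull_set_def by metis
qed

end
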